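(* Let $|\cdot|$ be a norm on $\mathbb{R}^d$ and let $\mathbf{X}=\{\mathbf{X}_j,j\in\mathbb{Z}\}$ be a strictly stationary, regularly varying $\mathbb{R}^d$-valued time series with tail process $\mathbf{Y}$. Let $u_n>0$ and positive integers $r_n$ satisfy $u_n\to\infty$, $r_n\to\infty$, $nw_n\to\infty$, $r_n/n\to0$, $r_nw_n\to0$, where $w_n=\mathbb{P}(|\mathbf{X}_0|>u_n)$. Let $\gamma\ge0$ and assume $\mathcal{S}^{(\gamma)}(r_n,u_n)$ holds. Let $H\in\mathcal{H}(\gamma)$. Then $$\lim_{L\to\infty}\limsup_{n\to\infty}\frac{\mathbb{E}\big[|H|(u_n^{-1}\mathbf{X}_{1,r_n})\mathbf{1}\{|H|(u_n^{-1}\mathbf{X}_{1,r_n})>L\}\big]}{r_nw_n}=0.$$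
   Context: Tail process: for all $i\le j$ the law of $x^{-1}(\mathbf{X}_i,\dots,\mathbf{X}_j)$ given $|\mathbf{X}_0|>x$ converges weakly to that of $(\mathbf{Y}_i,\dots,\mathbf{Y}_j)$ as $x\to\infty$. Notation: $\mathbf{x}_{i,j}=(\mathbf{x}_i,\dots,\mathbf{x}_j)$; the finite vector $u_n^{-1}\mathbf{X}_{1,r_n}$ is identified with the sequence having these entries at coordinates $1,\dots,r_n$ and $\mathbf{0}$ elsewhere; $\ell_0(\mathbb{R}^d)$ is the set of sequences tending to $0$ at $\pm\infty$. $\mathcal{S}^{(\gamma)}(r_n,u_n)$: for all $s,t>0$, $\lim_{\ell\to\infty}\limsup_{n\to\infty}\frac{1}{w_n}\sum_{i=\ell}^{r_n}i^\gamma\,\mathbb{P}(|\mathbf{X}_0|>u_ns,|\mathbf{X}_i|>u_nt)=0$. For $\mathbf{x}\in\ell_0(\mathbb{R}^d)$: $T_{\min}(\mathbf{x})=\inf\{j:|\mathbf{x}_j|>1\}$, $T_{\max}(\mathbf{x})=\sup\{j:|\mathbf{x}_j|>1\}$, $\mathrm{exc}(\mathbf{x})=\sum_j\mathbf{1}\{|\mathbf{x}_j|>1\}$, cluster length $\mathcal{K}(\mathbf{x})=T_{\max}(\mathbf{x})-T_{\min}(\mathbf{x})+1$ (and $0$ if $\mathrm{exc}(\mathbf{x})=0$). $\mathcal{H}(\gamma)$ is the class of functionals $H:\ell_0(\mathbb{R}^d)\to\mathbb{R}_+$ such that: (i) $H$ is continuous at almost every realization of $\mathbf{Y}$; (ii)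 $H(\mathbf{x})=0$ if $\mathrm{exc}(\mathbf{x})=0$; (iii) if $\mathrm{exc}(\mathbf{x})>0$ then $H(\mathbf{x})=H(\mathbf{x}_{T_{\min}(\mathbf{x}),T_{\max}(\mathbf{x})})$; (iv) there is $C_H>0$ with $H(\mathbf{x})\le C_H[\mathcal{K}(\mathbf{x})]^\gamma$ for all $\mathbf{x}$. *)

theory Defs
  imports "HOL-Probability.Probability"
begin

definition is_norm :: "('v::real_vector \<Rightarrow> real) \<Rightarrow> bool" where
  "is_norm N \<longleftrightarrow> (\<forall>x. N x = 0 \<longleftrightarrow> x = 0) \<and> (\<forall>c x. N (c *\<^sub>R x) = \<bar>c\<bar> * N x)
     \<and> (\<forall>x y. N (x + y) \<le> N x + N y)"

definition l0 :: "('v \<Rightarrow> real) \<Rightarrow> (int \<Rightarrow> 'v) set" where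
  "l0 N = {x. ((\<lambda>j. N (x j)) \<longlongrightarrow> 0) at_top \<and> ((\<lambda>j. N (x j)) \<longlongrightarrow> 0) at_bot}"

definition blk :: "int \<Rightarrow> int \<Rightarrow> (int \<Rightarrow> 'v::zero) \<Rightarrow> (int \<Rightarrow> 'v)" where
  "blk i j x = (\<lambda>k. if i \<le> k \<and> k \<le> j then x k else 0)"

definition exc :: "('v \<Rightarrow> real) \<Rightarrow> (int \<Rightarrow> 'v) \<Rightarrow> nat" where
  "exc N x = card {j. N (x j) > 1}"

definition Tmin :: "('v \<Rightarrow> real) \<Rightarrow> (int \<Rightarrow> 'v) \<Rightarrow> int" where
  "Tmin N x = Inf {j. N (x j) > 1}"

definition Tmax :: "('v \<Rightarrow> real) \<Rightarrow> (int \<Rightarrow> 'v) \<Rightarrow> int" where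
  "Tmax N x = Sup {j. N (x j) > 1}"

definition clen :: "('v \<Rightarrow> real) \<Rightarrow> (int \<Rightarrow> 'v) \<Rightarrow> nat" where
  "clen N x = (if exc N x = 0 then 0 else nat (Tmax N x - Tmin N x + 1))"

definition cont_l0 :: "('v::real_vector \<Rightarrow> real) \<Rightarrow> ((int \<Rightarrow> 'v) \<Rightarrow> real) \<Rightarrow> (int \<Rightarrow> 'v) \<Rightarrow> bool" where
  "cont_l0 N H y \<longleftrightarrow> (\<forall>e>0. \<exists>d>0. \<forall>x\<in>l0 N. (\<forall>j. N (x j - y j) \<le> d) \<longrightarrow> \<bar>H x - H y\<bar> < e)"

definition strictly_stationary :: "'a measure \<Rightarrow> (int \<Rightarrow> 'a \<Rightarrow> 'v::topological_space) \<Rightarrow> bool" where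
  "strictly_stationary M X \<longleftrightarrow> (\<forall>h I. finite I \<longrightarrow>
     distr M (Pi\<^sub>M I (\<lambda>_. borel)) (\<lambda>\<omega>. \<lambda>t\<in>I. X (t + h) \<omega>)
   = distr M (Pi\<^sub>M I (\<lambda>_. borel)) (\<lambda>\<omega>. \<lambda>t\<in>I. X t \<omega>))"

text \<open>Regular variation with tail process Y (Basrak--Segers characterisation):
  Y_0 has a Pareto(alpha) norm and, for all i \<le> j, the law of x^{-1}(X_i,...,X_j) given
  N(X_0) > x converges weakly (tested against all bounded continuous functions) to the
  law of (Y_i,...,Y_j), as x \<rightarrow> \<infinity>.\<close>
definition regvar_tail ::
  "'a measure \<Rightarrow> ('v::real_normed_vector \<Rightarrow> real) \<Rightarrow> (int \<Rightarrow> 'a \<Rightarrow> 'v)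
   \<Rightarrow> 'b measure \<Rightarrow> (int \<Rightarrow> 'b \<Rightarrow> 'v) \<Rightarrow> bool" where
  "regvar_tail M N X P Y \<longleftrightarrow>
     (\<exists>\<alpha>>0. \<forall>y\<ge>1. measure P {\<omega>\<in>space P. N (Y 0 \<omega>) > y} = y powr (-\<alpha>)) \<and>
     (\<forall>x. measure M {\<omega>\<in>space M. N (X 0 \<omega>) > x} > 0) \<and>
     (\<forall>i j. i \<le> j \<longrightarrow>
       (\<forall>f :: (int \<Rightarrow> 'v) \<Rightarrow> real. continuous_on UNIV f \<and> bounded (range f) \<longrightarrow>
         ((\<lambda>x::real. (\<integral>\<omega>. f (blk i j (\<lambda>k. (1 / x) *\<^sub>R X k \<omega>)) *
                          indicator {\<omega>. N (X 0 \<omega>) > x} \<omega> \<partial>M)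
                      / measure M {\<omega>\<in>space M. N (X 0 \<omega>) > x})
          \<longlongrightarrow> (\<integral>\<omega>. f (blk i j (\<lambda>k. Y k \<omega>)) \<partial>P)) at_top))"

definition Hclass ::
  "('v::real_normed_vector \<Rightarrow> real) \<Rightarrow> 'b measure \<Rightarrow> (int \<Rightarrow> 'b \<Rightarrow> 'v) \<Rightarrow> real
   \<Rightarrow> ((int \<Rightarrow> 'v) \<Rightarrow> real) \<Rightarrow> bool" where
  "Hclass N P Y \<gamma> H \<longleftrightarrow>
     (\<forall>x\<in>l0 N. H x \<ge> 0) \<and>
     (AE \<omega> in P. cont_l0 N H (\<lambda>j. Y j \<omega>)) \<and>
     (\<forall>x\<in>l0 N. exc N x = 0 \<longrightarrow> H x = 0) \<and>
     (\<forall>x\<in>l0 N. exc N x > 0 \<longrightarrow> H x = H (blk (Tmin N x) (Tmax N x) x)) \<and>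
     (\<exists>C>0. \<forall>x\<in>l0 N. H x \<le> C * real (clen N x) powr \<gamma>)"

definition cond_S ::
  "'a measure \<Rightarrow> ('v \<Rightarrow> real) \<Rightarrow> (int \<Rightarrow> 'a \<Rightarrow> 'v) \<Rightarrow> real \<Rightarrow> (nat \<Rightarrow> nat) \<Rightarrow> (nat \<Rightarrow> real) \<Rightarrow> bool" where
  "cond_S M N X \<gamma> r u \<longleftrightarrow> (\<forall>s>0. \<forall>t>0.
     ((\<lambda>l::nat. limsup (\<lambda>n. ereal (
        (\<Sum>i\<in>{l..r n}. real i powr \<gamma> *
           measure M {\<omega>\<in>space M. N (X 0 \<omega>) > u n * s \<and> N (X (int i) \<omega>) > u n * t})
        / measure M {\<omega>\<in>space M. N (X 0 \<omega>) > u n})))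
      \<longlonglongrightarrow> 0))"

end

theory Submission
  imports Defs
begin

text \<open>If the cluster functional of the rescaled block exceeds a large level L, then by the
growth bound H \<le> C K powr \<gamma> the block contains a cluster of length K > l, i.e. two exceedances
at positions i and i + k with l \<le> k \<le> r_n, and H is at most C (k + 1) powr \<gamma> \<le> C 2 powr \<gamma> k powr \<gamma>.
Summing over all such pairs and using stationarity bounds the expectation by
C 2 powr \<gamma> r_n \<Sum>(k = l..r_n) k powr \<gamma> P(|X_0| > u_n, |X_k| > u_n). Divided by r_n w_n this is
the sum controlled by S(\<gamma>)(r_n, u_n) with s = t = 1, whose limsup vanishes as l \<rightarrow> \<infinity>; and any
l is admissible once L \<ge> C l powr \<gamma>.\<close>

lemma is_norm_zero: "is_norm N \<Longrightarrow> N 0 = 0"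
  unfolding is_norm_def by blast

lemma is_norm_scaleR: "is_norm N \<Longrightarrow> N (c *\<^sub>R x) = \<bar>c\<bar> * N x"
  unfolding is_norm_def by blast

lemma is_norm_convex_on: "is_norm N \<Longrightarrow> convex_on UNIV N"
proof (rule convex_onI)
  fix t :: real and x y
  assume "is_norm N" "0 < t" "t < 1"
  then show "N ((1 - t) *\<^sub>R x + t *\<^sub>R y) \<le> (1 - t) * N x + t * N y"
    unfolding is_norm_def by (metis abs_of_pos diff_gt_0_iff_gt)
qed simp

lemma borel_measurable_is_norm:
  fixes N :: "'v::euclidean_space \<Rightarrow> real"
  assumes "is_norm N"
  shows "N \<in> borel_measurable borel"
  using convex_on_continuous[OF open_UNIV is_norm_convex_on[OF assms]]
  by (rule borel_measurable_continuous_onI)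

lemma sets_joint_exceedance:
  fixes X :: "int \<Rightarrow> 'a \<Rightarrow> 'v::euclidean_space"
  assumes "is_norm N" and "\<And>j. X j \<in> borel_measurable M"
  shows "{\<omega>\<in>space M. N (X i \<omega>) > c \<and> N (X j \<omega>) > c} \<in> sets M"
proof -
  have "(\<lambda>\<omega>. N (X j \<omega>)) \<in> borel_measurable M" for j
    using measurable_compose[OF assms(2) borel_measurable_is_norm[OF assms(1)]] .
  then show ?thesis
    by measurable
qed

lemma strictly_stationary_measure_joint_exceedance:
  fixes X :: "int \<Rightarrow> 'a \<Rightarrow> 'v::euclidean_space"
  assumes "is_norm N" and "strictly_stationary M X" and "\<And>j. X j \<in> borel_measurable M"
  shows "measure M {\<omega>\<in>space M. N (X i \<omega>) > c \<and> N (X (i + k) \<omega>) > c}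
       = measure M {\<omega>\<in>space M. N (X 0 \<omega>) > c \<and> N (X k \<omega>) > c}"
proof -
  let ?Pi = "Pi\<^sub>M {0, k} (\<lambda>_. borel) :: (int \<Rightarrow> 'v) measure"
  define B where "B = {f\<in>space ?Pi. N (f 0) > c \<and> N (f k) > c}"
  have "(\<lambda>f. N (f j)) \<in> borel_measurable ?Pi" if "j \<in> {0, k}" for j
    by (rule measurable_compose[OF measurable_component_singleton[OF that]
          borel_measurable_is_norm[OF assms(1)]])
  then have B: "B \<in> sets ?Pi"
    unfolding B_def by measurable
  have shifted: "(\<lambda>\<omega>. \<lambda>t\<in>{0, k}. X (t + i) \<omega>) \<in> measurable M ?Pi"
   and unshifted: "(\<lambda>\<omega>. \<lambda>t\<in>{0, k}. X t \<omega>) \<in> measurable M ?Pi"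
    by (intro measurable_restrict assms(3))+
  have "measure M {\<omega>\<in>space M. N (X i \<omega>) > c \<and> N (X (i + k) \<omega>) > c}
      = measure (distr M ?Pi (\<lambda>\<omega>. \<lambda>t\<in>{0, k}. X (t + i) \<omega>)) B"
    unfolding measure_distr[OF shifted B]
    by (auto simp: B_def space_PiM add.commute intro: arg_cong[where f="measure M"])
  also have "\<dots> = measure (distr M ?Pi (\<lambda>\<omega>. \<lambda>t\<in>{0, k}. X t \<omega>)) B"
    using assms(2) unfolding strictly_stationary_def by (simp add: finite.insertI)
  also have "\<dots> = measure M {\<omega>\<in>space M. N (X 0 \<omega>) > c \<and> N (X k \<omega>) > c}"
    unfolding measure_distr[OF unshifted B]
    by (auto simp: B_def space_PiM intro: arg_cong[where f="measure M"])
  finally show ?thesis .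
qed

lemma exc_pos_obtains_cluster_ends:
  assumes "exc N z > 0"
  obtains a b where "a \<le> b" "N (z a) > 1" "N (z b) > 1" "clen N z = nat (b - a + 1)"
proof -
  define S where "S = {j. N (z j) > 1}"
  have fin: "finite S" and ne: "S \<noteq> {}"
    using assms unfolding exc_def S_def by (auto simp: card_gt_0_iff)
  have "Min S \<le> Max S" "Min S \<in> S" "Max S \<in> S"
    using fin ne by auto
  moreover have "clen N z = nat (Max S - Min S + 1)"
    using assms fin ne unfolding clen_def Tmin_def Tmax_def S_def
    by (simp add: cInf_eq_Min cSup_eq_Max)
  ultimately show thesis
    using that unfolding S_def by blast
qed

lemma large_functional_obtains_long_cluster:
  assumes H_le: "H z \<le> C * real (clen N z) powr \<gamma>"
    and "L < H z" and L_ge: "C * real l powr \<gamma> \<le> L" and "0 \<le> C" and "0 \<le> \<gamma>"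
  obtains a k where "l \<le> k" "N (z a) > 1" "N (z (a + int k)) > 1"
    and "H z \<le> C * (real k + 1) powr \<gamma>"
proof -
  have "0 \<le> C * real l powr \<gamma>"
    using \<open>0 \<le> C\<close> by simp
  moreover have "H z \<le> 0" if "exc N z = 0"
    \<comment> \<open>0 powr \<gamma> = 0 even for \<gamma> = 0\<close>
    using H_le that by (simp add: clen_def)
  ultimately have "exc N z > 0"
    using \<open>L < H z\<close> L_ge by fastforce
  then obtain a b where ab: "a \<le> b" "N (z a) > 1" "N (z b) > 1" "clen N z = nat (b - a + 1)"
    by (rule exc_pos_obtains_cluster_ends)
  define k where "k = nat (b - a)"
  have clen_k: "real (clen N z) = real k + 1"
    using ab unfolding k_def by simp
  have "l \<le> k"
  proof (rule ccontr)
    assume "\<not> l \<le> k"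
    then have "C * (real k + 1) powr \<gamma> \<le> C * real l powr \<gamma>"
      using \<open>0 \<le> C\<close> \<open>0 \<le> \<gamma>\<close> by (intro mult_left_mono powr_mono2) auto
    then show False
      using H_le \<open>L < H z\<close> L_ge clen_k by simp
  qed
  moreover have "b = a + int k"
    using ab unfolding k_def by simp
  ultimately show thesis
    using that ab H_le clen_k by simp
qed

lemma blk_in_l0: "N 0 = 0 \<Longrightarrow> blk i j x \<in> l0 N"
proof -
  assume "N 0 = 0"
  then have "eventually (\<lambda>k. N (blk i j x k) = 0) at_top"
    unfolding eventually_at_top_linorder blk_def by (intro exI[of _ "j + 1"]) simp
  moreover have "eventually (\<lambda>k. N (blk i j x k) = 0) at_bot"
    using \<open>N 0 = 0\<close> unfolding eventually_at_bot_linorder blk_def by (intro exI[of _ "i - 1"]) simp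
  ultimately show ?thesis
    unfolding l0_def by (auto intro: tendsto_eventually)
qed

lemma blk_scaled_exceedance_iff:
  assumes "is_norm N" and "u > 0"
  shows "N (blk i j (\<lambda>k. (1 / u) *\<^sub>R x k) t) > 1 \<longleftrightarrow> i \<le> t \<and> t \<le> j \<and> N (x t) > u"
  using assms by (auto simp: blk_def is_norm_zero is_norm_scaleR field_simps)

lemma add_one_powr_le_two_powr_mult:
  fixes x \<gamma> :: real
  assumes "1 \<le> x" and "0 \<le> \<gamma>"
  shows "(x + 1) powr \<gamma> \<le> 2 powr \<gamma> * x powr \<gamma>"
proof -
  have "(x + 1) powr \<gamma> \<le> (2 * x) powr \<gamma>"
    using assms by (intro powr_mono2) auto
  then show ?thesis
    by (simp add: powr_mult)
qed

definition truncated_block_functional ::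
  "((int \<Rightarrow> 'v::real_vector) \<Rightarrow> real) \<Rightarrow> real \<Rightarrow> nat \<Rightarrow> real \<Rightarrow> (int \<Rightarrow> 'v) \<Rightarrow> real" where
  "truncated_block_functional H u r L x =
     (let h = \<bar>H (blk 1 (int r) (\<lambda>k. (1 / u) *\<^sub>R x k))\<bar> in h * indicator {z. z > L} h)"

lemma truncated_block_functional_nonneg: "0 \<le> truncated_block_functional H u r L x"
  unfolding truncated_block_functional_def by (simp add: Let_def indicator_def)

lemma truncated_block_functional_le:
  fixes N :: "'v::real_vector \<Rightarrow> real" and H :: "(int \<Rightarrow> 'v) \<Rightarrow> real"
  assumes N: "is_norm N"
    and H_nonneg: "\<forall>z\<in>l0 N. 0 \<le> H z" and H_le: "\<forall>z\<in>l0 N. H z \<le> C * real (clen N z) powr \<gamma>"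
    and "0 < u" and "0 \<le> C" and "0 \<le> \<gamma>" and "1 \<le> l" and L_ge: "C * real l powr \<gamma> \<le> L"
  shows "truncated_block_functional H u r L x
    \<le> C * 2 powr \<gamma> * (\<Sum>i\<in>{1..r}. \<Sum>k\<in>{l..r}.
          real k powr \<gamma> * of_bool (N (x (int i)) > u \<and> N (x (int i + int k)) > u))"
    (is "_ \<le> C * 2 powr \<gamma> * ?S")
proof -
  define Z where "Z = blk 1 (int r) (\<lambda>k. (1 / u) *\<^sub>R x k)"
  have Z: "Z \<in> l0 N"
    unfolding Z_def using N by (intro blk_in_l0 is_norm_zero)
  have "0 \<le> C * 2 powr \<gamma> * ?S"
    using \<open>0 \<le> C\<close> by (intro mult_nonneg_nonneg sum_nonneg) auto
  moreover have "H Z \<le> C * 2 powr \<gamma> * ?S" if "L < H Z"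
  proof -
    obtain a k where "l \<le> k" "N (Z a) > 1" "N (Z (a + int k)) > 1"
      and H_k: "H Z \<le> C * (real k + 1) powr \<gamma>"
      using large_functional_obtains_long_cluster H_le Z \<open>L < H Z\<close> L_ge \<open>0 \<le> C\<close> \<open>0 \<le> \<gamma>\<close>
      by metis
    then have "1 \<le> a" "a \<le> int r" "N (x a) > u" "a + int k \<le> int r" "N (x (a + int k)) > u"
      using blk_scaled_exceedance_iff[OF N \<open>0 < u\<close>] unfolding Z_def by auto
    then have i: "nat a \<in> {1..r}" "k \<in> {l..r}"
        "N (x (int (nat a))) > u" "N (x (int (nat a) + int k)) > u"
      using \<open>l \<le> k\<close> by auto
    let ?f = "\<lambda>i k. real k powr \<gamma> * of_bool (N (x (int i)) > u \<and> N (x (int i + int k)) > u)"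
    have "(real k + 1) powr \<gamma> \<le> 2 powr \<gamma> * real k powr \<gamma>"
      using \<open>1 \<le> l\<close> \<open>l \<le> k\<close> \<open>0 \<le> \<gamma>\<close> by (intro add_one_powr_le_two_powr_mult) auto
    then have "H Z \<le> C * (2 powr \<gamma> * real k powr \<gamma>)"
      using H_k \<open>0 \<le> C\<close> by (meson mult_left_mono order_trans)
    also have "real k powr \<gamma> = ?f (nat a) k"
      using i by simp
    also have "?f (nat a) k \<le> (\<Sum>k\<in>{l..r}. ?f (nat a) k)"
      by (rule member_le_sum[OF i(2)]) auto
    also have "\<dots> \<le> ?S"
      using i(1) by (intro member_le_sum[where i="nat a"] sum_nonneg) auto
    finally show ?thesis
      using \<open>0 \<le> C\<close> by (simp add: mult_left_mono mult.assoc)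
  qed
  ultimately show ?thesis
    using H_nonneg Z unfolding truncated_block_functional_def Z_def[symmetric]
    by (auto simp: indicator_def Let_def not_less)
qed

lemma expectation_truncated_block_functional_le:
  fixes N :: "'v::euclidean_space \<Rightarrow> real" and X :: "int \<Rightarrow> 'a \<Rightarrow> 'v"
    and H :: "(int \<Rightarrow> 'v) \<Rightarrow> real"
  assumes "finite_measure M" and N: "is_norm N"
    and X: "\<And>j. X j \<in> borel_measurable M" and stat: "strictly_stationary M X"
    and "\<forall>z\<in>l0 N. 0 \<le> H z" and "\<forall>z\<in>l0 N. H z \<le> C * real (clen N z) powr \<gamma>"
    and "0 < u" and "0 \<le> C" and "0 \<le> \<gamma>" and "1 \<le> l" and "C * real l powr \<gamma> \<le> L"
  shows "(\<integral>\<omega>. truncated_block_functional H u r L (\<lambda>k. X k \<omega>) \<partial>M)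
    \<le> C * 2 powr \<gamma> * real r * (\<Sum>k\<in>{l..r}. real k powr \<gamma> *
          measure M {\<omega>\<in>space M. N (X 0 \<omega>) > u \<and> N (X (int k) \<omega>) > u})"
proof -
  interpret finite_measure M by fact
  define A where "A i k = {\<omega>\<in>space M. N (X (int i) \<omega>) > u \<and> N (X (int i + int k) \<omega>) > u}"
    for i k
  define g where "g \<omega> = C * 2 powr \<gamma> *
      (\<Sum>i\<in>{1..r}. \<Sum>k\<in>{l..r}. real k powr \<gamma> * indicator (A i k) \<omega>)" for \<omega>
  have A: "A i k \<in> sets M" for i k
    unfolding A_def using N X by (rule sets_joint_exceedance)
  have term_integrable: "integrable M (\<lambda>\<omega>. real k powr \<gamma> * indicator (A i k) \<omega>)" for i k
    using A by (intro integrable_mult_right integrable_real_indicator) (simp_all add: less_top[symmetric])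
  have inner_integrable:
    "integrable M (\<lambda>\<omega>. \<Sum>k\<in>{l..r}. real k powr \<gamma> * indicator (A i k) \<omega>)" for i
    by (intro Bochner_Integration.integrable_sum term_integrable)
  have "integrable M g"
    unfolding g_def by (intro integrable_mult_right Bochner_Integration.integrable_sum inner_integrable)
  moreover have "0 \<le> g \<omega>" for \<omega>
    unfolding g_def using \<open>0 \<le> C\<close> by (intro mult_nonneg_nonneg sum_nonneg) auto
  moreover have "truncated_block_functional H u r L (\<lambda>k. X k \<omega>) \<le> g \<omega>"
    if "\<omega> \<in> space M" for \<omega>
    using truncated_block_functional_le[OF N assms(5-)] that
    by (simp add: g_def A_def indicator_def of_bool_def)
  \<comment> \<open>H need not be measurable; integral_mono' only asks the dominating function to be integrable\<close>
  ultimately have "(\<integral>\<omega>. truncated_block_functional H u r L (\<lambda>k. X k \<omega>) \<partial>M) \<le> integral\<^sup>L M g"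
    by (intro integral_mono') auto
  also have "\<dots> = C * 2 powr \<gamma> * (\<Sum>i\<in>{1..r}. \<Sum>k\<in>{l..r}. real k powr \<gamma> * measure M (A i k))"
    unfolding g_def using A
    by (simp only: integral_mult_right_zero Bochner_Integration.integral_sum[OF inner_integrable]
        Bochner_Integration.integral_sum[OF term_integrable] Bochner_Integration.integral_indicator
        sets.Int_space_eq2)
  also have "\<dots> = C * 2 powr \<gamma> * real r * (\<Sum>k\<in>{l..r}. real k powr \<gamma> *
          measure M {\<omega>\<in>space M. N (X 0 \<omega>) > u \<and> N (X (int k) \<omega>) > u})"
    unfolding A_def strictly_stationary_measure_joint_exceedance[OF N stat X] by simp
  finally show ?thesis .
qed

lemma limsup_truncated_block_ratio_le:
  fixes N :: "'v::euclidean_space \<Rightarrow> real" and X :: "int \<Rightarrow> 'a \<Rightarrow> 'v"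
    and H :: "(int \<Rightarrow> 'v) \<Rightarrow> real"
  assumes "finite_measure M" and "is_norm N"
    and "\<And>j. X j \<in> borel_measurable M" and "strictly_stationary M X"
    and "\<forall>z\<in>l0 N. 0 \<le> H z" and "\<forall>z\<in>l0 N. H z \<le> C * real (clen N z) powr \<gamma>"
    and u: "\<And>n. 0 < u n" and "0 \<le> C" and "0 \<le> \<gamma>" and "1 \<le> l" and "C * real l powr \<gamma> \<le> L"
    and r: "\<And>n. 1 \<le> r n" and w: "\<And>n. 0 < w n"
  shows "limsup (\<lambda>n. ereal ((\<integral>\<omega>. truncated_block_functional H (u n) (r n) L (\<lambda>k. X k \<omega>) \<partial>M)
                            / (real (r n) * w n)))
    \<le> ereal (C * 2 powr \<gamma>) * limsup (\<lambda>n. ereal ((\<Sum>k\<in>{l..r n}. real k powr \<gamma> *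
          measure M {\<omega>\<in>space M. N (X 0 \<omega>) > u n \<and> N (X (int k) \<omega>) > u n}) / w n))"
    (is "limsup (\<lambda>n. ereal (?E n / _)) \<le> ereal ?c * limsup (\<lambda>n. ereal (?S n / w n))")
proof -
  have "?E n / (real (r n) * w n) \<le> ?c * (?S n / w n)" for n
  proof -
    have rw: "0 < real (r n) * w n"
      using r[of n] w[of n] by simp
    then have "?E n / (real (r n) * w n) \<le> ?c * real (r n) * ?S n / (real (r n) * w n)"
      using expectation_truncated_block_functional_le[OF assms(1-6) u[of n] assms(8-11), where r="r n"]
      by (intro divide_right_mono) auto
    also have "\<dots> = ?c * (?S n / w n)"
      using rw by (simp add: field_simps)
    finally show ?thesis .
  qed
  then have "limsup (\<lambda>n. ereal (?E n / (real (r n) * w n)))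
      \<le> limsup (\<lambda>n. ereal ?c * ereal (?S n / w n))"
    by (intro Limsup_mono) simp
  also have "\<dots> = ereal ?c * limsup (\<lambda>n. ereal (?S n / w n))"
    using \<open>0 \<le> C\<close> by (intro limsup_ereal_mult_left) simp
  finally show ?thesis .
qed

lemma tendsto_zero_if_dominated:
  fixes f :: "'a \<Rightarrow> ereal" and g :: "nat \<Rightarrow> ereal"
  assumes "g \<longlonglongrightarrow> 0" and "\<And>x. 0 \<le> f x"
    and "eventually (\<lambda>l. eventually (\<lambda>x. f x \<le> g l) F) sequentially"
  shows "(f \<longlongrightarrow> 0) F"
proof (rule order_tendstoI)
  fix a :: ereal
  assume "a < 0"
  then show "eventually (\<lambda>x. a < f x) F"
    using assms(2) by (simp add: order_less_le_trans)
next
  fix a :: ereal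
  assume "0 < a"
  then have "eventually (\<lambda>l. g l < a \<and> eventually (\<lambda>x. f x \<le> g l) F) sequentially"
    using order_tendstoD(2)[OF assms(1)] assms(3) by (simp add: eventually_conj)
  then obtain l where "g l < a" "eventually (\<lambda>x. f x \<le> g l) F"
    using eventually_happens by force
  then show "eventually (\<lambda>x. f x < a) F"
    by (auto elim: eventually_mono)
qed

theorem lemma3p7:
  fixes M :: "'a measure" and P :: "'b measure"
    and N :: "real^'d \<Rightarrow> real"
    and X :: "int \<Rightarrow> 'a \<Rightarrow> real^'d" and Y :: "int \<Rightarrow> 'b \<Rightarrow> real^'d"
    and u :: "nat \<Rightarrow> real" and r :: "nat \<Rightarrow> nat" and w :: "nat \<Rightarrow> real"
    and \<gamma> :: real and H :: "(int \<Rightarrow> real^'d) \<Rightarrow> real"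
  assumes "prob_space M" and "prob_space P"
    and "is_norm N"
    and "\<And>j. X j \<in> borel_measurable M" and "\<And>j. Y j \<in> borel_measurable P"
    and "strictly_stationary M X"
    and "regvar_tail M N X P Y"
    and "\<And>n. u n > 0" and "\<And>n. r n \<ge> 1"
    and "filterlim u at_top sequentially" and "filterlim r at_top sequentially"
    and "\<And>n. w n = measure M {\<omega>\<in>space M. N (X 0 \<omega>) > u n}"
    and "filterlim (\<lambda>n. real n * w n) at_top sequentially"
    and "(\<lambda>n. real (r n) / real n) \<longlonglongrightarrow> 0"
    and "(\<lambda>n. real (r n) * w n) \<longlonglongrightarrow> 0"
    and "\<gamma> \<ge> 0"
    and "cond_S M N X \<gamma> r u"
    and "Hclass N P Y \<gamma> H"
  shows "((\<lambda>L::real. limsup (\<lambda>n. ereal (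
            (\<integral>\<omega>. (let h = \<bar>H (blk 1 (int (r n)) (\<lambda>k. (1 / u n) *\<^sub>R X k \<omega>))\<bar>
                   in h * indicator {z. z > L} h) \<partial>M)
            / (real (r n) * w n))))
         \<longlongrightarrow> 0) at_top"
proof -
  have "finite_measure M"
    using assms(1) unfolding prob_space_def by blast
  obtain C where "0 < C" and H_nonneg: "\<forall>z\<in>l0 N. 0 \<le> H z"
    and H_le: "\<forall>z\<in>l0 N. H z \<le> C * real (clen N z) powr \<gamma>"
    using assms(18) unfolding Hclass_def by blast
  have w_pos: "0 < w n" for n
    using assms(7,12) unfolding regvar_tail_def by auto
  let ?S = "\<lambda>l n. (\<Sum>k\<in>{l..r n}. real k powr \<gamma> *
      measure M {\<omega>\<in>space M. N (X 0 \<omega>) > u n \<and> N (X (int k) \<omega>) > u n}) / w n"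
  let ?B = "\<lambda>l. ereal (C * 2 powr \<gamma>) * limsup (\<lambda>n. ereal (?S l n))"
  let ?Q = "\<lambda>L. limsup (\<lambda>n. ereal ((\<integral>\<omega>. truncated_block_functional H (u n) (r n) L (\<lambda>k. X k \<omega>) \<partial>M)
      / (real (r n) * w n)))"
  have "(\<lambda>l. limsup (\<lambda>n. ereal (?S l n))) \<longlonglongrightarrow> 0"
    using assms(17)[unfolded cond_S_def, rule_format, of 1 1] unfolding assms(12)[symmetric] by simp
  then have "?B \<longlonglongrightarrow> 0"
    using tendsto_cmult_ereal[of "ereal (C * 2 powr \<gamma>)"] by fastforce
  moreover have "0 \<le> ?Q L" for L
    using w_pos assms(9) by (intro le_Limsup always_eventually allI)
      (auto intro!: divide_nonneg_pos mult_pos_pos Bochner_Integration.integral_nonneg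
        truncated_block_functional_nonneg simp: Suc_le_eq)
  moreover have "eventually (\<lambda>l. eventually (\<lambda>L. ?Q L \<le> ?B l) at_top) sequentially"
    using \<open>0 < C\<close>
    by (intro eventually_sequentiallyI[of 1] eventually_at_top_linorderI[of "C * real _ powr \<gamma>"]
        limsup_truncated_block_ratio_le[OF \<open>finite_measure M\<close> assms(3,4,6) H_nonneg H_le assms(8)
          _ assms(16) _ _ assms(9) w_pos]) auto
  ultimately have "(?Q \<longlongrightarrow> 0) at_top"
    by (rule tendsto_zero_if_dominated)
  then show ?thesis
    unfolding truncated_block_functional_def .
qed

end
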